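(* Let $K$ be an $n\times d$ real matrix with rows $K_1,\dots,K_n$, let $0<\delta_2\le\delta_1\le1/4$, and let $S\subseteq[n]$ satisfy (i) for all $j,\ell\in S$ with $j\ne\ell$: $|K_jK_\ell^T|\le\delta_1\min(\|K_j\|_2^2,\|K_\ell\|_2^2)$; (ii) for all $j\in S$, $\ell\notin S$: $|K_\ell K_j^T|\le\delta_2\min(\|K_j\|_2^2,\|K_\ell\|_2^2)$. Assume $K_i\neq0$ for all $i\in S$. Let $\rho=\frac{1}{1+\delta_1^2|S|+\delta_2^2n}$ and $U=\{i\in[n]:\tau_i(K)\ge\rho\}$. Then $S\subseteq U$ and $|U|\le d\,(1+\delta_1^2|S|+\delta_2^2n)$.
   Context: The leverage score of row $i$ of $K$ is $\tau_i(K)=\sup_{y\in\mathbb{R}^d:\,Ky\ne0}\frac{\langle K_i,y\rangle^2}{\sum_{j=1}^n\langle K_j,y\rangle^2}$, equivalently $K_i(K^TK)^{+}K_i^T$ with $^{+}$ the Moore–Penrose pseudoinverse. $[n]=\{1,\dots,n\}$. *)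

theory Defs
  imports "HOL-Analysis.Analysis"
begin

text \<open>A real n x d matrix K is modelled as K :: real^'d^'n; its rows are K $ i.
  The row index set [n] is UNIV :: 'n set, n = CARD('n), d = CARD('d).\<close>

text \<open>Leverage score of row i, as the supremum in the paper. Convention: if K = 0
  the supremum is over the empty set; we set it to 0 (agreeing with the
  pseudoinverse formula K_i (K^T K)^+ K_i^T = 0).\<close>
definition leverage :: "real^'d^'n \<Rightarrow> 'n \<Rightarrow> real" where
  "leverage K i =
     (if K = 0 then 0
      else Sup {(K $ i \<bullet> y)\<^sup>2 / (\<Sum>j\<in>UNIV. (K $ j \<bullet> y)\<^sup>2) | y. K *v y \<noteq> 0})"

end

theory Submission imports Defs begin

text \<open>For a row \<open>i \<in> S\<close>, testing the supremum defining \<open>\<tau>\<^sub>i(K)\<close> at \<open>y = K\<^sub>i\<close> gives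
  \<open>\<tau>\<^sub>i(K) \<ge> \<parallel>K\<^sub>i\<parallel>\<^sup>4 / \<Sum>\<^sub>j \<langle>K\<^sub>j,K\<^sub>i\<rangle>\<^sup>2\<close>, and the coherence hypotheses bound the denominator by
  \<open>(1 + \<delta>\<^sub>1\<^sup>2|S| + \<delta>\<^sub>2\<^sup>2n) \<parallel>K\<^sub>i\<parallel>\<^sup>4\<close>; hence \<open>S \<subseteq> U\<close>.
  For the cardinality bound, expand a vector \<open>v\<close> of the column space \<open>V\<close> of \<open>K\<close> in an
  orthonormal basis \<open>B\<close>: by Cauchy--Schwarz \<open>v\<^sub>i\<^sup>2 \<le> \<parallel>v\<parallel>\<^sup>2 c\<^sub>i\<close> with \<open>c\<^sub>i = \<Sum>\<^sub>b\<^sub>\<in>\<^sub>B b\<^sub>i\<^sup>2\<close>, so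
  \<open>\<tau>\<^sub>i(K) \<le> c\<^sub>i\<close> and the leverage scores sum to at most \<open>\<Sum>\<^sub>i c\<^sub>i = dim V \<le> d\<close>.
  Every row of \<open>U\<close> contributes at least \<open>\<rho>\<close> to this sum.\<close>

lemma power2_norm_vec: "(norm (v :: real^'n))\<^sup>2 = (\<Sum>j\<in>UNIV. (v $ j)\<^sup>2)"
  unfolding power2_norm_eq_inner by (simp add: inner_vec_def power2_eq_square)

lemma orthonormal_basis_Parseval:
  assumes "pairwise orthogonal B" "\<And>b. b \<in> B \<Longrightarrow> norm b = 1" "finite B" "x \<in> span B"
  shows "(norm x)\<^sup>2 = (\<Sum>b\<in>B. (x \<bullet> b)\<^sup>2)"
proof -
  have "pairwise (\<lambda>b b'. orthogonal ((x \<bullet> b) *\<^sub>R b) ((x \<bullet> b') *\<^sub>R b')) B"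
    using assms(1) by (auto simp: pairwise_def orthogonal_clauses)
  then have "(norm (\<Sum>b\<in>B. (x \<bullet> b) *\<^sub>R b))\<^sup>2 = (\<Sum>b\<in>B. (x \<bullet> b)\<^sup>2)"
    using assms(2,3) by (simp add: norm_sum_Pythagorean)
  then show ?thesis
    using orthonormal_basis_expand[OF assms(1,2,4,3)] by simp
qed

lemma subspace_component_weights:
  fixes V :: "(real^'n) set"
  assumes "subspace V"
  obtains c where "\<And>v i. v \<in> V \<Longrightarrow> (v $ i)\<^sup>2 \<le> (norm v)\<^sup>2 * c i"
    and "\<And>i. 0 \<le> c i" and "(\<Sum>i\<in>UNIV. c i) = real (dim V)"
proof -
  obtain B where B: "B \<subseteq> V" "pairwise orthogonal B" "\<And>b. b \<in> B \<Longrightarrow> norm b = 1"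
    "independent B" "card B = dim V" "span B = V"
    using orthonormal_basis_subspace[OF assms] by metis
  have "finite B"
    using B(4) independent_imp_finite by blast
  define c where "c i = (\<Sum>b\<in>B. (b $ i)\<^sup>2)" for i
  show thesis
  proof
    fix v i
    assume "v \<in> V"
    then have "v \<in> span B"
      using B(6) by simp
    have "v $ i = (\<Sum>b\<in>B. (v \<bullet> b) *\<^sub>R b) $ i"
      using orthonormal_basis_expand[OF B(2,3) \<open>v \<in> span B\<close> \<open>finite B\<close>] by simp
    also have "\<dots> = (\<Sum>b\<in>B. (v \<bullet> b) * b $ i)"
      by (simp add: sum_component)
    also have "\<dots>\<^sup>2 \<le> (\<Sum>b\<in>B. (v \<bullet> b)\<^sup>2) * c i"
      unfolding c_def by (rule Cauchy_Schwarz_ineq_sum)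
    also have "\<dots> = (norm v)\<^sup>2 * c i"
      using orthonormal_basis_Parseval[OF B(2,3) \<open>finite B\<close> \<open>v \<in> span B\<close>] by simp
    finally show "(v $ i)\<^sup>2 \<le> (norm v)\<^sup>2 * c i" .
  next
    show "0 \<le> c i" for i
      unfolding c_def by (simp add: sum_nonneg)
  next
    have "(\<Sum>i\<in>UNIV. c i) = (\<Sum>b\<in>B. \<Sum>i\<in>UNIV. (b $ i)\<^sup>2)"
      unfolding c_def by (rule sum.swap)
    also have "\<dots> = (\<Sum>b\<in>B. (norm b)\<^sup>2)"
      by (simp add: power2_norm_vec)
    also have "\<dots> = real (dim V)"
      using B(3,5) by simp
    finally show "(\<Sum>i\<in>UNIV. c i) = real (dim V)" .
  qed
qed

lemma sum_power2_inner_rows: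
  fixes K :: "real^'d^'n"
  shows "(\<Sum>j\<in>UNIV. (K $ j \<bullet> y)\<^sup>2) = (norm (K *v y))\<^sup>2"
  by (simp add: power2_norm_vec matrix_mult_dot)

lemma leverage_eq_Sup:
  fixes K :: "real^'d^'n"
  assumes "K \<noteq> 0"
  shows "leverage K i = Sup {((K *v y) $ i)\<^sup>2 / (norm (K *v y))\<^sup>2 | y. K *v y \<noteq> 0}"
  using assms unfolding leverage_def sum_power2_inner_rows by (simp add: matrix_mult_dot)

lemma leverage_le:
  fixes K :: "real^'d^'n"
  assumes "\<And>y. ((K *v y) $ i)\<^sup>2 \<le> (norm (K *v y))\<^sup>2 * c" and "0 \<le> c"
  shows "leverage K i \<le> c"
proof (cases "K = 0")
  case False
  then obtain y where "K *v y \<noteq> 0"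
    by (metis matrix_eq matrix_vector_mult_0)
  moreover have "((K *v z) $ i)\<^sup>2 / (norm (K *v z))\<^sup>2 \<le> c" if "K *v z \<noteq> 0" for z
    using assms(1)[of z] that by (simp add: pos_divide_le_eq mult.commute)
  ultimately show ?thesis
    unfolding leverage_eq_Sup[OF False] by (intro cSup_least) auto
qed (simp add: leverage_def assms(2))

lemma leverage_ge:
  fixes K :: "real^'d^'n"
  assumes "K *v y \<noteq> 0"
  shows "((K *v y) $ i)\<^sup>2 / (norm (K *v y))\<^sup>2 \<le> leverage K i"
proof -
  have "K \<noteq> 0"
    using assms by auto
  have "((K *v z) $ i)\<^sup>2 / (norm (K *v z))\<^sup>2 \<le> 1" for z
    using power2_mono[of "(K *v z) $ i" "norm (K *v z)"] component_le_norm_cart[of "K *v z" i]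
    by (simp add: divide_le_eq_1)
  then have "bdd_above {((K *v z) $ i)\<^sup>2 / (norm (K *v z))\<^sup>2 | z. K *v z \<noteq> 0}"
    by (intro bdd_aboveI[where M = 1]) auto
  then show ?thesis
    unfolding leverage_eq_Sup[OF \<open>K \<noteq> 0\<close>] using assms by (auto intro!: cSup_upper)
qed

lemma leverage_nonneg:
  fixes K :: "real^'d^'n"
  shows "0 \<le> leverage K i"
proof (cases "K = 0")
  case False
  then obtain y where "K *v y \<noteq> 0"
    by (metis matrix_eq matrix_vector_mult_0)
  then show ?thesis
    using leverage_ge[of K y i] by (meson divide_nonneg_nonneg order_trans zero_le_power2)
qed (simp add: leverage_def)

lemma sum_leverage_le_rank:
  fixes K :: "real^'d^'n"
  shows "(\<Sum>i\<in>UNIV. leverage K i) \<le> real (rank K)"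
proof -
  obtain c where c: "\<And>v i. v \<in> range ((*v) K) \<Longrightarrow> (v $ i)\<^sup>2 \<le> (norm v)\<^sup>2 * c i"
    "\<And>i. 0 \<le> c i" "(\<Sum>i\<in>UNIV. c i) = real (dim (range ((*v) K)))"
    using subspace_component_weights[OF linear_subspace_image[OF matrix_vector_mul_linear subspace_UNIV]]
    by blast
  have "(\<Sum>i\<in>UNIV. leverage K i) \<le> (\<Sum>i\<in>UNIV. c i)"
    by (intro sum_mono leverage_le c(1,2)) simp
  then show ?thesis
    using c(3) by (simp add: rank_dim_range)
qed

lemma card_leverage_ge:
  fixes K :: "real^'d^'n"
  assumes "0 < t"
  shows "real (card {i. t \<le> leverage K i}) * t \<le> real CARD('d)"
proof -
  have "real (card {i. t \<le> leverage K i}) * t = (\<Sum>i\<in>{i. t \<le> leverage K i}. t)"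
    by simp
  also have "\<dots> \<le> (\<Sum>i\<in>{i. t \<le> leverage K i}. leverage K i)"
    by (rule sum_mono) simp
  also have "\<dots> \<le> (\<Sum>i\<in>UNIV. leverage K i)"
    by (rule sum_mono2) (auto simp: leverage_nonneg)
  also have "\<dots> \<le> real CARD('d)"
    using sum_leverage_le_rank[of K] rank_bound[of K] by linarith
  finally show ?thesis .
qed

lemma leverage_ge_row:
  fixes K :: "real^'d^'n"
  assumes "K $ i \<noteq> 0" and "(\<Sum>j\<in>UNIV. (K $ j \<bullet> K $ i)\<^sup>2) \<le> D * (norm (K $ i))^4"
  shows "1 / D \<le> leverage K i"
proof -
  define a where "a = (norm (K $ i))\<^sup>2"
  have "0 < a"
    using assms(1) by (simp add: a_def)
  have "(K *v K $ i) $ i = a"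
    by (simp add: a_def matrix_mult_dot power2_norm_eq_inner)
  then have "K *v K $ i \<noteq> 0"
    using \<open>0 < a\<close> by auto
  have "(norm (K *v K $ i))\<^sup>2 \<le> D * a\<^sup>2"
    using assms(2) by (simp add: a_def sum_power2_inner_rows flip: power_mult)
  have "1 / D = a\<^sup>2 / (D * a\<^sup>2)"
    using \<open>0 < a\<close> by simp
  also have "\<dots> \<le> a\<^sup>2 / (norm (K *v K $ i))\<^sup>2"
    using \<open>K *v K $ i \<noteq> 0\<close> \<open>(norm (K *v K $ i))\<^sup>2 \<le> D * a\<^sup>2\<close> by (intro frac_le) auto
  also have "\<dots> \<le> leverage K i"
    using leverage_ge[OF \<open>K *v K $ i \<noteq> 0\<close>, of i] \<open>(K *v K $ i) $ i = a\<close> by simp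
  finally show ?thesis .
qed

lemma sum_power2_inner_row_le:
  fixes K :: "real^'d^'n"
  assumes "i \<in> S"
    and "\<And>j. j \<in> S \<Longrightarrow> j \<noteq> i \<Longrightarrow> \<bar>K $ j \<bullet> K $ i\<bar> \<le> \<delta>1 * (norm (K $ i))\<^sup>2"
    and "\<And>j. j \<notin> S \<Longrightarrow> \<bar>K $ j \<bullet> K $ i\<bar> \<le> \<delta>2 * (norm (K $ i))\<^sup>2"
  shows "(\<Sum>j\<in>UNIV. (K $ j \<bullet> K $ i)\<^sup>2)
           \<le> (1 + \<delta>1\<^sup>2 * real (card S) + \<delta>2\<^sup>2 * real CARD('n)) * (norm (K $ i))^4"
proof -
  define a where "a = (norm (K $ i))\<^sup>2"
  have square_le: "(K $ j \<bullet> K $ i)\<^sup>2 \<le> (\<delta> * a)\<^sup>2" if "\<bar>K $ j \<bullet> K $ i\<bar> \<le> \<delta> * a" for j \<delta>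
    using power2_mono[of "K $ j \<bullet> K $ i" "\<delta> * a"] that by linarith
  define g where "g j = (if j = i then a\<^sup>2 else 0) + (if j \<in> S then (\<delta>1 * a)\<^sup>2 else 0)
    + (\<delta>2 * a)\<^sup>2" for j
  have "(K $ j \<bullet> K $ i)\<^sup>2 \<le> g j" for j
  proof -
    consider "j = i" | "j \<in> S" "j \<noteq> i" | "j \<notin> S"
      by blast
    then show ?thesis
    proof cases
      case 1
      then show ?thesis
        by (simp add: g_def a_def power2_norm_eq_inner)
    next
      case 2
      then show ?thesis
        using square_le assms(2) by (simp add: g_def a_def add_increasing2)
    next
      case 3
      then show ?thesis
        using square_le assms(1,3) by (auto simp: g_def a_def)
    qed
  qed
  then have "(\<Sum>j\<in>UNIV. (K $ j \<bullet> K $ i)\<^sup>2) \<le> (\<Sum>j\<in>UNIV. g j)"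
    by (rule sum_mono)
  also have "\<dots> = (1 + \<delta>1\<^sup>2 * real (card S) + \<delta>2\<^sup>2 * real CARD('n)) * (norm (K $ i))^4"
    by (simp add: g_def a_def sum.distrib sum.If_cases algebra_simps)
  finally show ?thesis .
qed

lemma leverage_ge_coherent_row:
  fixes K :: "real^'d^'n"
  assumes "i \<in> S" "K $ i \<noteq> 0" "0 \<le> \<delta>1" "0 \<le> \<delta>2"
    and "\<forall>j\<in>S. j \<noteq> i \<longrightarrow>
           \<bar>K $ j \<bullet> K $ i\<bar> \<le> \<delta>1 * min ((norm (K $ j))\<^sup>2) ((norm (K $ i))\<^sup>2)"
    and "\<forall>j. j \<notin> S \<longrightarrow>
           \<bar>K $ j \<bullet> K $ i\<bar> \<le> \<delta>2 * min ((norm (K $ i))\<^sup>2) ((norm (K $ j))\<^sup>2)"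
  shows "1 / (1 + \<delta>1\<^sup>2 * real (card S) + \<delta>2\<^sup>2 * real CARD('n)) \<le> leverage K i"
proof (rule leverage_ge_row[OF \<open>K $ i \<noteq> 0\<close>])
  have "\<bar>K $ j \<bullet> K $ i\<bar> \<le> \<delta>1 * (norm (K $ i))\<^sup>2" if "j \<in> S" "j \<noteq> i" for j
    using assms(5) that mult_left_mono[OF min.cobounded2 \<open>0 \<le> \<delta>1\<close>] by (blast intro: order_trans)
  moreover have "\<bar>K $ j \<bullet> K $ i\<bar> \<le> \<delta>2 * (norm (K $ i))\<^sup>2" if "j \<notin> S" for j
    using assms(6) that mult_left_mono[OF min.cobounded1 \<open>0 \<le> \<delta>2\<close>] by (blast intro: order_trans)
  ultimately show "(\<Sum>j\<in>UNIV. (K $ j \<bullet> K $ i)\<^sup>2)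
      \<le> (1 + \<delta>1\<^sup>2 * real (card S) + \<delta>2\<^sup>2 * real CARD('n)) * (norm (K $ i))^4"
    using sum_power2_inner_row_le[OF \<open>i \<in> S\<close>] by blast
qed

theorem mainTheorem7:
  fixes K :: "real^'d^'n" and \<delta>1 \<delta>2 :: real and S :: "'n set"
  assumes "0 < \<delta>2" and "\<delta>2 \<le> \<delta>1" and "\<delta>1 \<le> 1/4"
    and "\<forall>j\<in>S. \<forall>l\<in>S. j \<noteq> l \<longrightarrow>
           \<bar>K $ j \<bullet> K $ l\<bar> \<le> \<delta>1 * min ((norm (K $ j))\<^sup>2) ((norm (K $ l))\<^sup>2)"
    and "\<forall>j\<in>S. \<forall>l. l \<notin> S \<longrightarrow>
           \<bar>K $ l \<bullet> K $ j\<bar> \<le> \<delta>2 * min ((norm (K $ j))\<^sup>2) ((norm (K $ l))\<^sup>2)"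
    and "\<forall>i\<in>S. K $ i \<noteq> 0"
  shows "S \<subseteq> {i. leverage K i \<ge> 1 / (1 + \<delta>1\<^sup>2 * real (card S) + \<delta>2\<^sup>2 * real CARD('n))}
       \<and> real (card {i. leverage K i \<ge> 1 / (1 + \<delta>1\<^sup>2 * real (card S) + \<delta>2\<^sup>2 * real CARD('n))})
           \<le> real CARD('d) * (1 + \<delta>1\<^sup>2 * real (card S) + \<delta>2\<^sup>2 * real CARD('n))"
proof -
  define D where "D = 1 + \<delta>1\<^sup>2 * real (card S) + \<delta>2\<^sup>2 * real CARD('n)"
  have "0 < D"
    unfolding D_def by (simp add: add_pos_nonneg)
  have "1 / D \<le> leverage K i" if "i \<in> S" for i
    unfolding D_def using assms that
    by (intro leverage_ge_coherent_row[where S = S]) auto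
  moreover have "real (card {i. 1 / D \<le> leverage K i}) \<le> real CARD('d) * D"
    using card_leverage_ge[of "1 / D" K] \<open>0 < D\<close> by (simp add: field_simps)
  ultimately show ?thesis
    unfolding D_def by auto
qed

end
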